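(* Let $U\in U(2)$ and $U_{\mathfrak s}=\frac12(U+U^T)$. Then the trace norm of $U_{\mathfrak s}$ (the sum of its singular values) equals $\sqrt{\operatorname{tr}[U\overline U]+2}$.
   Context: $\overline U$ is the entrywise complex conjugate of $U$. *)

theory Defs
  imports "Jordan_Normal_Form.Schur_Decomposition" "Jordan_Normal_Form.Char_Poly"
    "HOL-Computational_Algebra.Fundamental_Theorem_Algebra"
begin

definition singular_values :: "complex mat \<Rightarrow> real multiset" where
  "singular_values A = image_mset (\<lambda>z. sqrt (Re z)) (proots (char_poly (mat_adjoint A * A)))"

definition trace_norm :: "complex mat \<Rightarrow> real" where
  "trace_norm A = sum_mset (singular_values A)"

definition unitary_mat :: "complex mat \<Rightarrow> bool" where
  "unitary_mat U \<longleftrightarrow> U * mat_adjoint U = 1\<^sub>m (dim_row U) \<and> mat_adjoint U * U = 1\<^sub>m (dim_row U)"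

definition mat_trace :: "complex mat \<Rightarrow> complex" where
  "mat_trace A = (\<Sum>i<dim_row A. A $$ (i, i))"

end

theory Submission
  imports Defs
begin

text \<open>For a 2x2 matrix S the eigenvalues of S^H S have sum ||S||_F^2 and product
  |det S|^2, hence the singular values satisfy (s1 + s2)^2 = ||S||_F^2 + 2 |det S|.
  A unitary U = [[a, b], [c, d]] has c = -e b*, d = e a* with e = det U, |e| = 1.
  For its symmetric part one finds e* det U_s = 1 - |b - c|^2/4 >= 0, and then
  ||U_s||_F^2 + 2 |det U_s| = |a|^2 + |d|^2 + 2 Re (b c*) + 2 = tr (U U-bar) + 2.\<close>

lemma mat_adjoint_carrier: "A \<in> carrier_mat n m \<Longrightarrow> mat_adjoint A \<in> carrier_mat m n"
  unfolding mat_adjoint_def by (simp add: mat_of_rows_def)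

lemma index_mat_adjoint:
  "A \<in> carrier_mat n m \<Longrightarrow> i < m \<Longrightarrow> j < n \<Longrightarrow> mat_adjoint A $$ (i, j) = conjugate (A $$ (j, i))"
  unfolding mat_adjoint_def by (simp add: mat_of_rows_def)

lemma index_mult_mat_2x2:
  assumes "A \<in> carrier_mat 2 2" "B \<in> carrier_mat 2 2" "i < 2" "j < 2"
  shows "(A * B) $$ (i, j) = A $$ (i, 0) * B $$ (0, j) + A $$ (i, 1) * B $$ (1, j)"
  using assms by (simp add: scalar_prod_def numeral_2_eq_2)

lemma mat_trace_2x2: "A \<in> carrier_mat 2 2 \<Longrightarrow> mat_trace A = A $$ (0, 0) + A $$ (1, 1)"
  unfolding mat_trace_def by (simp add: numeral_2_eq_2)

lemma det_1x1: "(A :: 'a :: comm_ring_1 mat) \<in> carrier_mat 1 1 \<Longrightarrow> det A = A $$ (0, 0)"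
  by (simp add: det_def sign_def)

lemma det_2x2:
  assumes "(A :: 'a :: comm_ring_1 mat) \<in> carrier_mat 2 2"
  shows "det A = A $$ (0, 0) * A $$ (1, 1) - A $$ (0, 1) * A $$ (1, 0)"
proof -
  have "det A = (\<Sum>i<2. A $$ (i, 0) * cofactor A i 0)"
    by (rule laplace_expansion_column[OF assms]) simp
  also have "\<dots> = A $$ (0, 0) * A $$ (1, 1) - A $$ (0, 1) * A $$ (1, 0)"
    using assms by (simp add: cofactor_def numeral_2_eq_2 mat_delete_def det_1x1)
  finally show ?thesis .
qed

lemma char_poly_2x2:
  assumes "(A :: 'a :: comm_ring_1 mat) \<in> carrier_mat 2 2"
  shows "char_poly A = [: A $$ (0, 0) * A $$ (1, 1) - A $$ (0, 1) * A $$ (1, 0), - (A $$ (0, 0) + A $$ (1, 1)), 1 :]"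
proof -
  have "char_poly_matrix A \<in> carrier_mat 2 2" using assms by simp
  then show ?thesis
    unfolding char_poly_def det_2x2[OF \<open>char_poly_matrix A \<in> carrier_mat 2 2\<close>] using assms
    by (simp add: char_poly_matrix_def algebra_simps)
qed

text \<open>The roots of \<open>x\<^sup>2 - T x + D\<close> are \<open>r\<^sub>1, r\<^sub>2 \<ge> 0\<close>, and
  \<open>(sqrt r\<^sub>1 + sqrt r\<^sub>2)\<^sup>2 = r\<^sub>1 + r\<^sub>2 + 2 sqrt (r\<^sub>1 r\<^sub>2)\<close>.\<close>
lemma sum_sqrt_proots_real_quadratic:
  fixes T D :: real
  assumes "D \<ge> 0" "T \<ge> 0" "4 * D \<le> T\<^sup>2"
  shows "(\<Sum>z \<in># proots [:complex_of_real D, - complex_of_real T, 1:]. sqrt (Re z))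
         = sqrt (T + 2 * sqrt D)"
proof -
  define s where "s = sqrt (T\<^sup>2 - 4 * D)"
  define r1 where "r1 = (T + s) / 2"
  define r2 where "r2 = (T - s) / 2"
  have s_nonneg: "s \<ge> 0" unfolding s_def by (rule real_sqrt_ge_zero) (use assms(3) in linarith)
  have s_square: "s\<^sup>2 = T\<^sup>2 - 4 * D" unfolding s_def by (rule real_sqrt_pow2) (use assms(3) in linarith)
  have "s\<^sup>2 \<le> T\<^sup>2" using s_square assms(1) by linarith
  then have "s \<le> T" using assms(2) by (rule power2_le_imp_le)
  then have r_nonneg: "r1 \<ge> 0" "r2 \<ge> 0" using s_nonneg unfolding r1_def r2_def by simp_all
  have prod: "r1 * r2 = D" and sum: "r1 + r2 = T"
    unfolding r1_def r2_def using s_square by (simp_all add: field_simps power2_eq_square)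
  have factor: "[:complex_of_real D, - complex_of_real T, 1:] = [:- of_real r1, 1:] * [:- of_real r2, 1:]"
    by (simp flip: prod sum)
  have roots: "proots [:complex_of_real D, - complex_of_real T, 1:] = {# of_real r1, of_real r2 #}"
    unfolding factor by (subst proots_mult) auto
  have "sqrt r1 + sqrt r2 = sqrt (T + 2 * sqrt D)"
  proof (rule real_sqrt_unique[symmetric])
    show "(sqrt r1 + sqrt r2)\<^sup>2 = T + 2 * sqrt D"
      using r_nonneg by (simp add: power2_sum flip: prod sum real_sqrt_mult)
  qed (use r_nonneg in auto)
  then show ?thesis unfolding roots by simp
qed

lemma trace_norm_2x2:
  fixes S :: "complex mat"
  assumes S: "S \<in> carrier_mat 2 2"
  shows "trace_norm S = sqrt ((cmod (S $$ (0, 0)))\<^sup>2 + (cmod (S $$ (1, 0)))\<^sup>2 + (cmod (S $$ (0, 1)))\<^sup>2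
           + (cmod (S $$ (1, 1)))\<^sup>2 + 2 * cmod (det S))"
proof -
  define p q r s where "p = S $$ (0, 0)" "q = S $$ (0, 1)" "r = S $$ (1, 0)" "s = S $$ (1, 1)"
  define M where "M = mat_adjoint S * S"
  have SA: "mat_adjoint S \<in> carrier_mat 2 2" using S by (rule mat_adjoint_carrier)
  have M: "M \<in> carrier_mat 2 2" unfolding M_def using S SA by simp
  have M_entry: "M $$ (i, j) = cnj (S $$ (0, i)) * S $$ (0, j) + cnj (S $$ (1, i)) * S $$ (1, j)"
    if "i < 2" "j < 2" for i j
    unfolding M_def index_mult_mat_2x2[OF SA S that] using that S by (simp add: index_mat_adjoint)
  define x y m where "x = (cmod p)\<^sup>2 + (cmod r)\<^sup>2" "y = (cmod q)\<^sup>2 + (cmod s)\<^sup>2"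
    "m = cmod (cnj p * q + cnj r * s)"
  have det_S: "det S = p * s - q * r" using det_2x2[OF S] by (simp add: p_q_r_s_def)
  have "det M = det (mat_adjoint S) * det S" unfolding M_def by (rule det_mult[OF SA S])
  also have "\<dots> = complex_of_real ((cmod (det S))\<^sup>2)"
    unfolding det_2x2[OF SA] det_S complex_norm_square
    using S by (simp add: index_mat_adjoint p_q_r_s_def algebra_simps)
  finally have det_M: "det M = complex_of_real ((cmod (det S))\<^sup>2)" .
  have tr_M: "M $$ (0, 0) + M $$ (1, 1) = complex_of_real (x + y)"
    using M_entry[of 0 0] M_entry[of 1 1]
    unfolding x_y_m_def of_real_add complex_norm_square by (simp add: p_q_r_s_def algebra_simps)
  text \<open>Cauchy-Schwarz for the columns of S, in the exact form of Lagrange's identity.\<close>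
  have "complex_of_real ((cmod (det S))\<^sup>2) = complex_of_real (x * y - m\<^sup>2)"
    unfolding of_real_diff of_real_mult x_y_m_def of_real_add complex_norm_square det_S
    by (simp add: algebra_simps)
  then have lagrange: "(cmod (det S))\<^sup>2 = x * y - m\<^sup>2" using of_real_eq_iff by blast
  have "(x + y)\<^sup>2 - 4 * (cmod (det S))\<^sup>2 = (x - y)\<^sup>2 + 4 * m\<^sup>2"
    unfolding lagrange by (simp add: power2_eq_square algebra_simps)
  then have discr: "4 * (cmod (det S))\<^sup>2 \<le> (x + y)\<^sup>2"
    using zero_le_power2[of "x - y"] zero_le_power2[of m] by linarith
  have cp: "char_poly M = [:complex_of_real ((cmod (det S))\<^sup>2), - complex_of_real (x + y), 1:]"
    unfolding char_poly_2x2[OF M] det_2x2[OF M, symmetric] det_M tr_M ..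
  have "trace_norm S = sqrt (x + y + 2 * sqrt ((cmod (det S))\<^sup>2))"
    unfolding trace_norm_def singular_values_def M_def[symmetric] cp
    by (rule sum_sqrt_proots_real_quadratic[OF _ _ discr]) (auto simp: x_y_m_def)
  then show ?thesis unfolding x_y_m_def p_q_r_s_def by (simp add: add.assoc)
qed

lemma unitary_mat_2x2_entries:
  fixes U :: "complex mat"
  assumes U: "U \<in> carrier_mat 2 2" and "unitary_mat U"
  shows "(cmod (U $$ (0, 0)))\<^sup>2 + (cmod (U $$ (0, 1)))\<^sup>2 = 1"
    and "cmod (det U) = 1"
    and "U $$ (1, 0) = - det U * cnj (U $$ (0, 1))"
    and "U $$ (1, 1) = det U * cnj (U $$ (0, 0))"
proof -
  define a b c d where "a = U $$ (0, 0)" "b = U $$ (0, 1)" "c = U $$ (1, 0)" "d = U $$ (1, 1)"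
  have UA: "mat_adjoint U \<in> carrier_mat 2 2" using U by (rule mat_adjoint_carrier)
  have unitary: "U * mat_adjoint U = 1\<^sub>m 2" using assms unfolding unitary_mat_def by auto
  have rows: "U $$ (i, 0) * cnj (U $$ (j, 0)) + U $$ (i, 1) * cnj (U $$ (j, 1)) = (if i = j then 1 else 0)"
    if "i < 2" "j < 2" for i j
    using arg_cong[OF unitary, of "\<lambda>M. M $$ (i, j)", unfolded index_mult_mat_2x2[OF U UA that]] that U
    by (simp add: index_mat_adjoint)
  have row0: "a * cnj a + b * cnj b = 1" using rows[of 0 0] by (simp add: a_b_c_d_def)
  have row1: "c * cnj c + d * cnj d = 1" using rows[of 1 1] by (simp add: a_b_c_d_def)
  have rows01: "cnj a * c + cnj b * d = 0"
    using arg_cong[OF rows[of 0 1], of cnj] by (simp add: a_b_c_d_def mult.commute)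
  have det_U: "det U = a * d - b * c" using det_2x2[OF U] by (simp add: a_b_c_d_def)
  have "det U * cnj a = d * (a * cnj a + b * cnj b) - b * (cnj a * c + cnj b * d)"
    unfolding det_U by (simp add: algebra_simps)
  then have d: "det U * cnj a = d" using row0 rows01 by simp
  have "det U * cnj b = a * (cnj a * c + cnj b * d) - c * (a * cnj a + b * cnj b)"
    unfolding det_U by (simp add: algebra_simps)
  then have c: "det U * cnj b = - c" using row0 rows01 by simp
  have "det U * cnj (det U) * (a * cnj a + b * cnj b)
      = (det U * cnj a) * cnj (det U * cnj a) + (det U * cnj b) * cnj (det U * cnj b)"
    by (simp add: algebra_simps)
  then have "det U * cnj (det U) = 1" using row0 row1 unfolding c d by (simp add: add.commute)
  then have "complex_of_real ((cmod (det U))\<^sup>2) = 1" by (simp only: complex_norm_square)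
  then have "(cmod (det U))\<^sup>2 = 1" using of_real_eq_1_iff by blast
  then show "cmod (det U) = 1" using norm_ge_zero[of "det U"] by (auto simp: power2_eq_1_iff)
  show "(cmod (U $$ (0, 0)))\<^sup>2 + (cmod (U $$ (0, 1)))\<^sup>2 = 1"
    using row0 unfolding a_b_c_d_def
    by (metis complex_norm_square of_real_add of_real_eq_1_iff)
  show "U $$ (1, 0) = - det U * cnj (U $$ (0, 1))" using c by (simp add: a_b_c_d_def)
  show "U $$ (1, 1) = det U * cnj (U $$ (0, 0))" using d by (simp add: a_b_c_d_def)
qed

text \<open>With w = b - c one has det = e - w^2/4 and conj w = conj e * w, so multiplying
  by conj e makes the determinant real; it is nonnegative as |w| <= |b| + |c| <= 2.\<close>
lemma norm_det_symmetric_part_unitary_2x2: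
  fixes a b c d e :: complex
  assumes row: "(cmod a)\<^sup>2 + (cmod b)\<^sup>2 = 1" and e: "cmod e = 1"
    and c: "c = - e * cnj b" and d: "d = e * cnj a"
  shows "cmod (a * d - ((b + c) / 2)\<^sup>2) = 1 - (cmod (b - c))\<^sup>2 / 4"
proof -
  define w where "w = b - c"
  have row': "a * cnj a + b * cnj b = 1"
    using row by (metis complex_norm_square of_real_add of_real_eq_1_iff)
  have e': "e * cnj e = 1" using e by (metis complex_norm_square of_real_1 one_power2)
  have "a * d - ((b + c) / 2)\<^sup>2 = e * (a * cnj a + b * cnj b) - w\<^sup>2 / 4"
    unfolding w_def d by (simp add: c field_simps power2_eq_square)
  also have "\<dots> = e - w\<^sup>2 / 4" using row' by simp
  finally have det: "a * d - ((b + c) / 2)\<^sup>2 = e - w\<^sup>2 / 4" .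
  have "cnj e * w = cnj e * b + (e * cnj e) * cnj b" unfolding w_def c by (simp add: algebra_simps)
  then have cnj_w: "cnj w = cnj e * w" using e' unfolding w_def c by simp
  have "(e - w\<^sup>2 / 4) * cnj e = e * cnj e - w * (cnj e * w) / 4"
    by (simp add: algebra_simps power2_eq_square)
  also have "\<dots> = 1 - w * cnj w / 4" using e' cnj_w by simp
  also have "\<dots> = complex_of_real (1 - (cmod w)\<^sup>2 / 4)"
    unfolding of_real_diff of_real_divide complex_norm_square by simp
  finally have real_det: "(e - w\<^sup>2 / 4) * cnj e = complex_of_real (1 - (cmod w)\<^sup>2 / 4)" .
  have "cmod w \<le> 2"
  proof -
    have "(cmod b)\<^sup>2 \<le> 1" using row zero_le_power2[of "cmod a"] by linarith
    then have "cmod b \<le> 1" using abs_square_le_1[of "cmod b"] by simp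
    moreover have "cmod c = cmod b" using e by (simp add: c norm_mult)
    ultimately show ?thesis using norm_triangle_ineq4[of b c] unfolding w_def by linarith
  qed
  then have "(cmod w)\<^sup>2 \<le> 2\<^sup>2" by (rule power_mono) simp
  then have "0 \<le> 1 - (cmod w)\<^sup>2 / 4" by simp
  then have "cmod ((e - w\<^sup>2 / 4) * cnj e) = 1 - (cmod w)\<^sup>2 / 4"
    unfolding real_det norm_of_real by (rule abs_of_nonneg)
  then show ?thesis using e unfolding det by (simp add: norm_mult w_def)
qed

theorem lemma3:
  fixes U :: "complex mat"
  assumes "U \<in> carrier_mat 2 2" and "unitary_mat U"
  shows "complex_of_real (trace_norm ((1/2) \<cdot>\<^sub>m (U + transpose_mat U)))
           = csqrt (mat_trace (U * map_mat cnj U) + 2)"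
proof -
  note U = assms(1)
  define S where "S = (1/2) \<cdot>\<^sub>m (U + transpose_mat U)"
  define a b c d where "a = U $$ (0, 0)" "b = U $$ (0, 1)" "c = U $$ (1, 0)" "d = U $$ (1, 1)"
  have S: "S \<in> carrier_mat 2 2" unfolding S_def using U by simp
  have S_entries: "S $$ (0, 0) = a" "S $$ (0, 1) = (b + c) / 2" "S $$ (1, 0) = (b + c) / 2" "S $$ (1, 1) = d"
    unfolding S_def a_b_c_d_def using U by simp_all
  have det_S: "cmod (det S) = 1 - (cmod (b - c))\<^sup>2 / 4"
    unfolding det_2x2[OF S] S_entries power2_eq_square[symmetric] a_b_c_d_def
    by (rule norm_det_symmetric_part_unitary_2x2[OF unitary_mat_2x2_entries[OF assms]])
  define R where "R = (cmod a)\<^sup>2 + 2 * (cmod ((b + c) / 2))\<^sup>2 + (cmod d)\<^sup>2 + 2 * cmod (det S)"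
  have "R \<ge> 0" unfolding R_def by simp
  have "trace_norm S = sqrt R" unfolding trace_norm_2x2[OF S] S_entries R_def by simp
  have "map_mat cnj U \<in> carrier_mat 2 2" using U by simp
  then have "mat_trace (U * map_mat cnj U) = a * cnj a + b * cnj c + c * cnj b + d * cnj d"
    using U by (simp add: mat_trace_2x2 index_mult_mat_2x2 a_b_c_d_def del: index_mult_mat)
  then have radicand: "complex_of_real R = mat_trace (U * map_mat cnj U) + 2"
    unfolding R_def det_S of_real_add of_real_mult of_real_diff of_real_divide complex_norm_square
    by (simp add: field_simps)
  show ?thesis unfolding S_def[symmetric] \<open>trace_norm S = sqrt R\<close> radicand[symmetric]
    by (rule csqrt_of_real[symmetric]) fact
qed

end
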